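(* Let $c$ be a positive integer and let $G=(V,E)$ be a graph on $n$ vertices such that at least $3n/4$ of its vertices have degree at least $4c$. Then $G$ has at most $5n/6$ $c$-edge-connected components.
   Context: Graphs are undirected and may have parallel edges but no self-loops. A graph is $c$-edge-connected if it has no cut of size $<c$; a single vertex is $c$-edge-connected. The $c$-edge-connected components are the maximal induced $c$-edge-connected subgraphs; their vertex sets partition $V$. *)

theory Defs
  imports Main
begin

text \<open>A finite undirected multigraph without self-loops on vertex set V is given by an
  edge-multiplicity function m: m u v is the number of parallel edges between u and v.\<close>

definition multigraph :: "'a set \<Rightarrow> ('a \<Rightarrow> 'a \<Rightarrow> nat) \<Rightarrow> bool" where
  "multigraph V m \<longleftrightarrow> finite V \<and> (\<forall>u v. m u v = m v u) \<and> (\<forall>v. m v v = 0)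
     \<and> (\<forall>u v. m u v \<noteq> 0 \<longrightarrow> u \<in> V \<and> v \<in> V)"

definition degree :: "'a set \<Rightarrow> ('a \<Rightarrow> 'a \<Rightarrow> nat) \<Rightarrow> 'a \<Rightarrow> nat" where
  "degree V m v = (\<Sum>u\<in>V. m v u)"

definition edges_between :: "('a \<Rightarrow> 'a \<Rightarrow> nat) \<Rightarrow> 'a set \<Rightarrow> 'a set \<Rightarrow> nat" where
  "edges_between m S T = (\<Sum>u\<in>S. \<Sum>w\<in>T. m u w)"

definition edge_connected_on :: "nat \<Rightarrow> ('a \<Rightarrow> 'a \<Rightarrow> nat) \<Rightarrow> 'a set \<Rightarrow> bool" where
  "edge_connected_on c m U \<longleftrightarrow>
     (\<forall>S. S \<subseteq> U \<and> S \<noteq> {} \<and> S \<noteq> U \<longrightarrow> edges_between m S (U - S) \<ge> c)"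

definition ec_components :: "nat \<Rightarrow> 'a set \<Rightarrow> ('a \<Rightarrow> 'a \<Rightarrow> nat) \<Rightarrow> 'a set set" where
  "ec_components c V m = {U. U \<subseteq> V \<and> U \<noteq> {} \<and> edge_connected_on c m U \<and>
     (\<forall>W. U \<subset> W \<and> W \<subseteq> V \<longrightarrow> \<not> edge_connected_on c m W)}"

end

theory Submission
  imports Defs
begin

text \<open>Let K be the set of c-edge-connected components and k = |K|. Any union of at least two
  components is not c-edge-connected, so it has a cut with fewer than c edges, and every
  component lies on one side of that cut. Splitting recursively shows that at most (c-1)(k-1)
  edges join different components. A singleton component {v} with deg v \<ge> 4c contributes at
  least 4c edge ends to these edges, so fewer than k/2 vertices are singleton components of high
  degree. Since all other singleton components lie among the at most n/4 low-degree vertices,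
  there are fewer than k/2 + n/4 singleton components; all other components have at least two
  vertices, so 2k - (k/2 + n/4) < n, i.e. 6k < 5n.\<close>

lemma edges_between_mono:
  assumes "S \<subseteq> S'" "T \<subseteq> T'" "finite S'" "finite T'"
  shows "edges_between m S T \<le> edges_between m S' T'"
proof -
  have "edges_between m S T \<le> (\<Sum>u\<in>S. \<Sum>w\<in>T'. m u w)"
    unfolding edges_between_def
    by (rule sum_mono, rule sum_mono2) (use assms in auto)
  also have "\<dots> \<le> edges_between m S' T'"
    unfolding edges_between_def by (rule sum_mono2) (use assms in auto)
  finally show ?thesis .
qed

lemma edges_between_Union_left:
  assumes "\<And>A. A \<in> F \<Longrightarrow> finite A" "pairwise disjnt F"
  shows "edges_between m (\<Union>F) T = (\<Sum>A\<in>F. edges_between m A T)"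
  using sum.Union_disjoint[of F "\<lambda>u. \<Sum>w\<in>T. m u w"] assms
  unfolding edges_between_def pairwise_def disjnt_def by simp

lemma edges_between_Un_right:
  assumes "T1 \<inter> T2 = {}" "finite T1" "finite T2"
  shows "edges_between m S (T1 \<union> T2) = edges_between m S T1 + edges_between m S T2"
  unfolding edges_between_def using assms by (simp add: sum.union_disjoint sum.distrib)

lemma edges_between_commute:
  assumes "\<And>u v. m u v = m v u"
  shows "edges_between m S T = edges_between m T S"
  unfolding edges_between_def using assms by (subst sum.swap) simp

lemma edges_between_singleton_eq_degree:
  assumes "finite V" "v \<in> V" "m v v = 0"
  shows "edges_between m {v} (V - {v}) = degree V m v"
  using sum.remove[OF assms(1,2), of "m v"] assms(3)
  unfolding edges_between_def degree_def by simp

text \<open>The cut restricted to C is a cut of C.\<close>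
lemma edge_connected_on_cut_ge:
  assumes "edge_connected_on c m C" "C \<subseteq> U" "finite U" "S \<subseteq> U"
    and "S \<inter> C \<noteq> {}" "C - S \<noteq> {}"
  shows "c \<le> edges_between m S (U - S)"
proof -
  have "c \<le> edges_between m (S \<inter> C) (C - (S \<inter> C))"
    using assms(1,5,6) unfolding edge_connected_on_def by blast
  also have "\<dots> \<le> edges_between m S (U - S)"
    by (rule edges_between_mono) (use assms finite_subset[OF assms(4,3)] in auto)
  finally show ?thesis .
qed

lemma edge_connected_on_singleton: "edge_connected_on c m {v}"
  unfolding edge_connected_on_def by (auto simp: subset_singleton_iff)

lemma edge_connected_on_Un:
  assumes "edge_connected_on c m A" "edge_connected_on c m B" "A \<inter> B \<noteq> {}"
    and "finite A" "finite B"
  shows "edge_connected_on c m (A \<union> B)"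
  unfolding edge_connected_on_def
proof (intro allI impI)
  fix S assume S: "S \<subseteq> A \<union> B \<and> S \<noteq> {} \<and> S \<noteq> A \<union> B"
  have "(S \<inter> A \<noteq> {} \<and> A - S \<noteq> {}) \<or> (S \<inter> B \<noteq> {} \<and> B - S \<noteq> {})"
    using S assms(3) by blast
  then show "c \<le> edges_between m S (A \<union> B - S)"
    using edge_connected_on_cut_ge[OF assms(1), of "A \<union> B" S]
      edge_connected_on_cut_ge[OF assms(2), of "A \<union> B" S] S assms(4,5) by auto
qed

lemma ec_componentsD:
  assumes "C \<in> ec_components c V m"
  shows "C \<subseteq> V" "C \<noteq> {}" "edge_connected_on c m C"
    "\<And>W. C \<subset> W \<Longrightarrow> W \<subseteq> V \<Longrightarrow> \<not> edge_connected_on c m W"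
  using assms unfolding ec_components_def by auto

lemma finite_ec_components:
  assumes "finite V"
  shows "finite (ec_components c V m)"
  by (rule finite_subset[of _ "Pow V"]) (auto simp: ec_components_def assms)

lemma ec_components_disjoint:
  assumes "finite V"
  shows "pairwise disjnt (ec_components c V m)"
proof (rule pairwiseI, rule ccontr)
  fix C D assume C: "C \<in> ec_components c V m" and D: "D \<in> ec_components c V m"
    and "C \<noteq> D" and "\<not> disjnt C D"
  have fin: "finite C" "finite D"
    using ec_componentsD(1)[OF C] ec_componentsD(1)[OF D] assms by (auto intro: finite_subset)
  have "edge_connected_on c m (C \<union> D)"
    using edge_connected_on_Un[OF ec_componentsD(3)[OF C] ec_componentsD(3)[OF D] _ fin]
      \<open>\<not> disjnt C D\<close> by (simp add: disjnt_def)
  moreover have "C \<union> D \<subseteq> V" using ec_componentsD(1)[OF C] ec_componentsD(1)[OF D] by blast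
  moreover have "C \<subset> C \<union> D \<or> D \<subset> C \<union> D" using \<open>C \<noteq> D\<close> by blast
  ultimately show False
    using ec_componentsD(4)[OF C] ec_componentsD(4)[OF D] by blast
qed

lemma Union_ec_components:
  assumes "finite V"
  shows "\<Union>(ec_components c V m) = V"
proof
  show "\<Union>(ec_components c V m) \<subseteq> V" by (auto dest: ec_componentsD(1))
next
  show "V \<subseteq> \<Union>(ec_components c V m)"
  proof
    fix v assume "v \<in> V"
    let ?A = "{W. W \<subseteq> V \<and> edge_connected_on c m W}"
    have finite: "finite ?A" by (rule finite_subset[of _ "Pow V"]) (auto simp: assms)
    have singleton: "{v} \<in> ?A" using \<open>v \<in> V\<close> by (simp add: edge_connected_on_singleton)
    obtain W where W: "W \<in> ?A" "{v} \<subseteq> W"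
      and maximal: "\<forall>W'\<in>?A. W \<subseteq> W' \<longrightarrow> W = W'"
      using finite_has_maximal2[OF finite singleton] by blast
    have "W \<in> ec_components c V m"
      using W maximal by (auto simp: ec_components_def)
    with \<open>{v} \<subseteq> W\<close> show "v \<in> \<Union>(ec_components c V m)" by blast
  qed
qed

text \<open>For a family F of disjoint vertex sets, every edge joining two different members
  of F is counted twice, once from each end.\<close>
definition cross_edges :: "('a \<Rightarrow> 'a \<Rightarrow> nat) \<Rightarrow> 'a set set \<Rightarrow> nat" where
  "cross_edges m F = (\<Sum>C\<in>F. edges_between m C (\<Union>F - C))"

lemma cross_edges_Un:
  assumes sym: "\<And>u v. m u v = m v u"
    and fin: "finite F1" "finite F2" "\<And>A. A \<in> F1 \<union> F2 \<Longrightarrow> finite A"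
    and disj: "pairwise disjnt (F1 \<union> F2)" "F1 \<inter> F2 = {}"
  shows "cross_edges m (F1 \<union> F2)
    = cross_edges m F1 + cross_edges m F2 + 2 * edges_between m (\<Union>F1) (\<Union>F2)"
proof -
  have "disjnt A B" if "A \<in> F1" "B \<in> F2" for A B
    using pairwiseD[OF disj(1)] that disj(2) by blast
  then have sides: "\<Union>F1 \<inter> \<Union>F2 = {}" unfolding disjnt_def by blast
  have finU: "finite (\<Union>F1)" "finite (\<Union>F2)" using fin by auto
  have split1: "edges_between m C (\<Union>(F1 \<union> F2) - C)
      = edges_between m C (\<Union>F1 - C) + edges_between m C (\<Union>F2)" if "C \<in> F1" for C
  proof -
    have "\<Union>(F1 \<union> F2) - C = (\<Union>F1 - C) \<union> \<Union>F2" "(\<Union>F1 - C) \<inter> \<Union>F2 = {}"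
      using sides that by blast+
    then show ?thesis using edges_between_Un_right[of "\<Union>F1 - C" "\<Union>F2" m C] finU by simp
  qed
  have split2: "edges_between m C (\<Union>(F1 \<union> F2) - C)
      = edges_between m C (\<Union>F2 - C) + edges_between m C (\<Union>F1)" if "C \<in> F2" for C
  proof -
    have "\<Union>(F1 \<union> F2) - C = (\<Union>F2 - C) \<union> \<Union>F1" "(\<Union>F2 - C) \<inter> \<Union>F1 = {}"
      using sides that by blast+
    then show ?thesis using edges_between_Un_right[of "\<Union>F2 - C" "\<Union>F1" m C] finU by simp
  qed
  have pw: "pairwise disjnt F1" "pairwise disjnt F2"
    using pairwise_subset[OF disj(1)] by blast+
  have "cross_edges m (F1 \<union> F2)
      = (\<Sum>C\<in>F1. edges_between m C (\<Union>(F1 \<union> F2) - C))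
        + (\<Sum>C\<in>F2. edges_between m C (\<Union>(F1 \<union> F2) - C))"
    unfolding cross_edges_def using fin disj by (simp add: sum.union_disjoint)
  also have "\<dots> = cross_edges m F1 + (\<Sum>C\<in>F1. edges_between m C (\<Union>F2))
      + (cross_edges m F2 + (\<Sum>C\<in>F2. edges_between m C (\<Union>F1)))"
    unfolding cross_edges_def using split1 split2 by (simp add: sum.distrib)
  also have "(\<Sum>C\<in>F1. edges_between m C (\<Union>F2)) = edges_between m (\<Union>F1) (\<Union>F2)"
    using edges_between_Union_left[OF _ pw(1)] fin by simp
  also have "(\<Sum>C\<in>F2. edges_between m C (\<Union>F1)) = edges_between m (\<Union>F2) (\<Union>F1)"
    using edges_between_Union_left[OF _ pw(2)] fin by simp
  also have "\<dots> = edges_between m (\<Union>F1) (\<Union>F2)"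
    by (rule edges_between_commute[OF sym])
  finally show ?thesis by simp
qed

lemma cross_edges_ec_components_le:
  assumes "finite V" "\<And>u v. m u v = m v u" "F \<subseteq> ec_components c V m"
  shows "cross_edges m F \<le> 2 * (c - 1) * (card F - 1)"
  using assms(3)
proof (induction "card F" arbitrary: F rule: less_induct)
  case less
  have finF: "finite F"
    using finite_subset[OF less.prems finite_ec_components[OF assms(1)]] .
  have disjF: "pairwise disjnt F"
    using pairwise_subset[OF ec_components_disjoint[OF assms(1)] less.prems] .
  have compF: "C \<subseteq> V" "C \<noteq> {}" "edge_connected_on c m C" if "C \<in> F" for C
    using ec_componentsD(1-3)[OF subsetD[OF less.prems that]] by auto
  have finC: "finite C" if "C \<in> F" for C
    using compF(1)[OF that] assms(1) by (rule finite_subset)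
  show ?case
  proof (cases "card F \<le> 1")
    case True
    then have "F = {} \<or> (\<exists>C. F = {C})"
      using finF by (auto simp: le_Suc_eq card_1_singleton_iff)
    then show ?thesis by (auto simp: cross_edges_def edges_between_def)
  next
    case False
    then obtain C0 C1 where C01: "C0 \<in> F" "C1 \<in> F" "C0 \<noteq> C1"
      using finF by (auto simp: card_le_Suc0_iff_eq)
    define X where "X = \<Union>F"
    have finX: "finite X" using finF finC X_def by blast
    have "X \<subseteq> V" using compF(1) X_def by blast
    moreover have "C0 \<inter> C1 = {}" using disjF C01 by (simp add: pairwise_def disjnt_def)
    then have "C0 \<subset> X" using compF(2)[OF C01(2)] C01 X_def by blast
    ultimately have "\<not> edge_connected_on c m X"
      using ec_componentsD(4)[OF subsetD[OF less.prems C01(1)]] by blast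
    then obtain S where S: "S \<subseteq> X" "S \<noteq> {}" "S \<noteq> X" "edges_between m S (X - S) < c"
      unfolding edge_connected_on_def by (auto simp: not_le)
    have side: "C \<subseteq> S \<or> C \<inter> S = {}" if "C \<in> F" for C
      using edge_connected_on_cut_ge[OF compF(3)[OF that], of X S] that S(1,4) finX X_def
      by (auto simp: not_le[symmetric])
    define F1 where "F1 = {C\<in>F. C \<subseteq> S}"
    define F2 where "F2 = {C\<in>F. C \<inter> S = {}}"
    have F12: "F = F1 \<union> F2" "F1 \<inter> F2 = {}"
      using side compF(2) unfolding F1_def F2_def by blast+
    have U12: "\<Union>F1 = S" "\<Union>F2 = X - S"
      using S(1) side unfolding X_def F1_def F2_def by blast+
    have "F1 \<noteq> {}" "F2 \<noteq> {}" using U12 S by auto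
    then have card12: "card F = card F1 + card F2" "0 < card F1" "0 < card F2"
      using F12 finF by (auto simp: card_Un_disjoint card_gt_0_iff)
    have "cross_edges m F = cross_edges m F1 + cross_edges m F2 + 2 * edges_between m S (X - S)"
      using cross_edges_Un[OF assms(2), of F1 F2] F12 finF finC disjF U12 by simp
    also have "\<dots> \<le> 2 * (c - 1) * (card F1 - 1) + 2 * (c - 1) * (card F2 - 1) + 2 * (c - 1)"
    proof (intro add_mono)
      show "cross_edges m F1 \<le> 2 * (c - 1) * (card F1 - 1)"
        using less.hyps[of F1] card12 F12 less.prems by auto
      show "cross_edges m F2 \<le> 2 * (c - 1) * (card F2 - 1)"
        using less.hyps[of F2] card12 F12 less.prems by auto
      show "2 * edges_between m S (X - S) \<le> 2 * (c - 1)"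
        using S(4) by simp
    qed
    also have "\<dots> = 2 * (c - 1) * (card F - 1)"
    proof -
      obtain a b where "card F1 = Suc a" "card F2 = Suc b"
        using card12(2,3) gr0_conv_Suc by metis
      moreover have "2 * d * a + 2 * d * b + 2 * d = 2 * d * (Suc a + Suc b - 1)" for d :: nat
        by (simp add: algebra_simps)
      ultimately show ?thesis using card12(1) by simp
    qed
    finally show ?thesis .
  qed
qed

lemma sum_degree_singletons_le_cross_edges:
  assumes "finite V" "\<Union>K = V" "\<And>v. m v v = 0"
  shows "(\<Sum>v | {v} \<in> K. degree V m v) \<le> cross_edges m K"
proof -
  let ?P = "{v. {v} \<in> K}"
  have finK: "finite K" using assms(1,2) finite_UnionD by blast
  have "degree V m v = edges_between m {v} (V - {v})" if "v \<in> ?P" for v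
  proof -
    have "v \<in> V" using that assms(2) by blast
    then show ?thesis using assms(1,3) by (simp add: edges_between_singleton_eq_degree)
  qed
  then have "(\<Sum>v\<in>?P. degree V m v) = (\<Sum>v\<in>?P. edges_between m {v} (V - {v}))"
    by (rule sum.cong[OF refl])
  also have "\<dots> = (\<Sum>C\<in>(\<lambda>v. {v}) ` ?P. edges_between m C (V - C))"
    by (simp add: sum.reindex)
  also have "\<dots> \<le> cross_edges m K"
    unfolding cross_edges_def assms(2) by (rule sum_mono2[OF finK]) auto
  finally show ?thesis .
qed

lemma card_partition_singletons:
  assumes "finite K" "\<And>C. C \<in> K \<Longrightarrow> finite C \<and> C \<noteq> {}" "pairwise disjnt K"
  shows "2 * card K \<le> card (\<Union>K) + card {v. {v} \<in> K}"
proof -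
  have "{C\<in>K. card C = 1} = (\<lambda>v. {v}) ` {v. {v} \<in> K}"
    by (auto simp: card_1_singleton_iff)
  then have singletons: "card {v. {v} \<in> K} = (\<Sum>C\<in>K. if card C = 1 then 1 else 0)"
    using assms(1) by (simp add: card_image sum.inter_filter[symmetric])
  have "2 * card K = (\<Sum>C\<in>K. 2)" by simp
  also have "\<dots> \<le> (\<Sum>C\<in>K. card C + (if card C = 1 then 1 else 0))"
  proof (rule sum_mono)
    fix C assume "C \<in> K"
    then have "card C \<noteq> 0" using assms(2) by simp
    then show "2 \<le> card C + (if card C = 1 then 1 else 0)" by simp
  qed
  also have "\<dots> = card (\<Union>K) + card {v. {v} \<in> K}"
    using card_Union_disjoint[OF assms(3)] assms(2) singletons by (simp add: sum.distrib)
  finally show ?thesis .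
qed

lemma card_ec_components_le_singletons:
  assumes "finite V"
  shows "2 * card (ec_components c V m) \<le> card V + card {v. {v} \<in> ec_components c V m}"
proof -
  have "C \<in> ec_components c V m \<Longrightarrow> finite C \<and> C \<noteq> {}" for C
    using finite_subset[OF ec_componentsD(1) assms] ec_componentsD(2) by blast
  from card_partition_singletons[OF finite_ec_components[OF assms] this
      ec_components_disjoint[OF assms]]
  show ?thesis by (simp add: Union_ec_components[OF assms])
qed

lemma card_high_degree_singleton_components:
  assumes "multigraph V m"
  shows "d * card {v. {v} \<in> ec_components c V m \<and> d \<le> degree V m v}
    \<le> 2 * (c - 1) * (card (ec_components c V m) - 1)"
proof -
  let ?K = "ec_components c V m"
  let ?Q = "{v. {v} \<in> ?K \<and> d \<le> degree V m v}"
  have finV: "finite V" and sym: "\<And>u v. m u v = m v u" and loopfree: "\<And>v. m v v = 0"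
    using assms unfolding multigraph_def by auto
  have UK: "\<Union>?K = V" using Union_ec_components[OF finV] .
  have "{v. {v} \<in> ?K} \<subseteq> V" using UK by blast
  then have finP: "finite {v. {v} \<in> ?K}" using finV by (rule finite_subset)
  have "d * card ?Q \<le> (\<Sum>v\<in>?Q. degree V m v)"
    using sum_mono[of ?Q "\<lambda>_. d" "degree V m"] by (auto simp: mult.commute)
  also have "\<dots> \<le> (\<Sum>v | {v} \<in> ?K. degree V m v)"
    using finP by (intro sum_mono2) auto
  also have "\<dots> \<le> cross_edges m ?K"
    using sum_degree_singletons_le_cross_edges[of V ?K m, OF finV UK loopfree] .
  also have "\<dots> \<le> 2 * (c - 1) * (card ?K - 1)"
    using cross_edges_ec_components_le[of V m, OF finV sym] by simp
  finally show ?thesis .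
qed

theorem lemma2:
  fixes V :: "'a set" and m :: "'a \<Rightarrow> 'a \<Rightarrow> nat" and c :: nat
  assumes "multigraph V m"
    and "c > 0"
    and "4 * card {v \<in> V. degree V m v \<ge> 4 * c} \<ge> 3 * card V"
  shows "6 * card (ec_components c V m) \<le> 5 * card V"
proof -
  define k where "k = card (ec_components c V m)"
  define P where "P = {v. {v} \<in> ec_components c V m}"
  define H where "H = {v \<in> V. degree V m v \<ge> 4 * c}"
  have finV: "finite V" using assms(1) unfolding multigraph_def by simp
  have PV: "P \<subseteq> V" using Union_ec_components[OF finV] P_def by blast
  have "2 * k \<le> card V + card P"
    using card_ec_components_le_singletons[OF finV] k_def P_def by simp
  moreover have "card P + card H \<le> card (P \<inter> H) + card V"
  proof -
    have "finite P" "finite H" using finite_subset[OF PV finV] finV H_def by auto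
    moreover have "card (P \<union> H) \<le> card V" using card_mono[OF finV] PV H_def by auto
    ultimately show ?thesis using card_Un_Int[of P H] by simp
  qed
  moreover have "2 * card (P \<inter> H) \<le> k - 1"
  proof -
    have "P \<inter> H = {v. {v} \<in> ec_components c V m \<and> 4 * c \<le> degree V m v}"
      using PV unfolding P_def H_def by blast
    then have "4 * c * card (P \<inter> H) \<le> 2 * (c - 1) * (k - 1)"
      using card_high_degree_singleton_components[OF assms(1), of "4 * c" c] k_def by simp
    also have "\<dots> \<le> 2 * c * (k - 1)" by simp
    finally have "c * (4 * card (P \<inter> H)) \<le> c * (2 * (k - 1))" by (simp add: ac_simps)
    then show ?thesis using assms(2) by simp
  qed
  ultimately show ?thesis using assms(3) unfolding k_def H_def by linarith
qed

end
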